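(* Let $K$ be a convex domain of minimal width $w$. Then $h_K>0$ if and only if there is $t>0$ such that $\omega_K(\tau)\le\pi/2$ for all $0\le\tau\le t$. Moreover, every $s\in[0,w]$ with $\omega_-(s)\le \pi/2\le\omega_+(s)$ satisfies $h_K\ge s$ (in particular $h_K\ge \mu_K:=\max\{s\in[0,w]:\omega_-(s)\le\pi/2\le\omega_+(s)\}$).
   Context: A convex domain is a compact convex subset $K\subset\mathbb{C}$ with nonempty interior. Its minimal width is $w=\min_{\gamma}\left(\max_{z\in K}\mathrm{Re}(ze^{i\gamma})-\min_{z\in K}\mathrm{Re}(ze^{i\gamma})\right)$. A unit vector $\nu$ is an outer normal to $K$ at $z\in\partial K$ if $\mathrm{Re}((u-z)\overline{\nu})\le0$ for all $u\in K$. For $\theta,\tau\in\mathbb{R}$ let $d_{\mathbb{T}}(\theta,\tau)$ be the distance of $\theta-\tau$ from $2\pi\mathbb{Z}$. For $0\le t<w$, $\omega_K(t):=\sup\{d_{\mathbb{T}}(\arg\nu,\arg\mu): \nu,\mu \text{ outer unit normals to } K \text{ at } z,z'\in\partial K,\ |z-z'|\le t\}$. Set $\omega_-(0):=0$, $\omega_-(s):=\lim_{r\to s^-}\omega_K(r)$ for $0<s\le w$, $\omega_+(s):=\lim_{r\to s^+}\omega_K(r)$ for $0\le s<w$, and $\omega_+(w):=\pi$. For an outer unit normal $\nu$ at $\zeta$, $(\zeta+\nu\mathbb{R})\cap K=[\zeta,\zeta-h\nu]$ with $h\ge0$; the local depth $h_K(\zeta)$ is the maximum of such $h$ over all outer unit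 normals at $\zeta$, and $h_K:=\inf_{\zeta\in\partial K}h_K(\zeta)$. *)

theory Defs
  imports "HOL-Analysis.Analysis"
begin

definition convex_domain :: "complex set \<Rightarrow> bool" where
  "convex_domain K \<longleftrightarrow> compact K \<and> convex K \<and> interior K \<noteq> {}"

definition dir_width :: "complex set \<Rightarrow> real \<Rightarrow> real" where
  "dir_width K \<gamma> = (SUP z\<in>K. Re (z * cis \<gamma>)) - (INF z\<in>K. Re (z * cis \<gamma>))"

definition min_width :: "complex set \<Rightarrow> real" where
  "min_width K = (INF \<gamma>\<in>(UNIV::real set). dir_width K \<gamma>)"

definition outer_normal :: "complex set \<Rightarrow> complex \<Rightarrow> complex \<Rightarrow> bool" where
  "outer_normal K z \<nu> \<longleftrightarrow> z \<in> frontier K \<and> norm \<nu> = 1 \<and>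
     (\<forall>u\<in>K. Re ((u - z) * cnj \<nu>) \<le> 0)"

definition dT :: "real \<Rightarrow> real \<Rightarrow> real" where
  "dT \<theta> \<tau> = (INF k\<in>(UNIV::int set). \<bar>\<theta> - \<tau> - 2 * pi * real_of_int k\<bar>)"

definition omegaK :: "complex set \<Rightarrow> real \<Rightarrow> real" where
  "omegaK K t = Sup {dT (Arg \<nu>) (Arg \<mu>) | \<nu> \<mu> z z'.
       outer_normal K z \<nu> \<and> outer_normal K z' \<mu> \<and> dist z z' \<le> t}"

definition omega_minus :: "complex set \<Rightarrow> real \<Rightarrow> real" where
  "omega_minus K s = (if s = 0 then 0 else Lim (at_left s) (omegaK K))"

definition omega_plus :: "complex set \<Rightarrow> real \<Rightarrow> real" where
  "omega_plus K s = (if s < min_width K then Lim (at_right s) (omegaK K) else pi)"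

text \<open>Depth along the inner normal direction: (zeta + nu R) \<inter> K = [zeta, zeta - h nu].\<close>
definition normal_depth :: "complex set \<Rightarrow> complex \<Rightarrow> complex \<Rightarrow> real" where
  "normal_depth K \<zeta> \<nu> = Sup {h. h \<ge> 0 \<and> \<zeta> - complex_of_real h * \<nu> \<in> K}"

definition local_depth :: "complex set \<Rightarrow> complex \<Rightarrow> real" where
  "local_depth K \<zeta> = Sup {normal_depth K \<zeta> \<nu> | \<nu>. outer_normal K \<zeta> \<nu>}"

definition depth :: "complex set \<Rightarrow> real" where
  "depth K = (INF \<zeta>\<in>frontier K. local_depth K \<zeta>)"

end

theory Submission
  imports Defs
begin

text \<open>
  If normals at boundary points less than \<open>t\<close> apart never form an obtuse angle, the inner
  normal chord at every boundary point \<open>\<zeta>\<close> has length at least \<open>t\<close>: otherwise the nearest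
  boundary point \<open>q\<close> to a point of the normal line just outside \<open>K\<close> is less than \<open>t\<close> away
  from \<open>\<zeta>\<close>, and its normal points back against the normal at \<open>\<zeta>\<close>. Hence \<open>h\<^sub>K \<ge> t\<close>, which
  gives \<open>h\<^sub>K > 0\<close> under the angle condition, and \<open>h\<^sub>K \<ge> s\<close> because \<open>\<omega>\<^sub>-(s) \<le> \<pi>/2\<close> forces
  \<open>\<omega>\<^sub>K \<le> \<pi>/2\<close> on \<open>[0, s)\<close>.

  Conversely, if obtuse pairs of normals occur at arbitrarily small distances, compactness
  yields a corner \<open>p\<close> with two normals at an angle \<open>\<ge> \<pi>/2\<close>, so \<open>K\<close> lies in a right-angled
  quadrant at \<open>p\<close>, while near \<open>p\<close> there are support lines tilted into that quadrant.
  Cutting \<open>K\<close> by a line parallel to one side of the quadrant just above such a tilted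
  support line, the end point of the cut lies on the boundary and every normal chord there is
  short, bounded by twice the distance of the tilted support point to \<open>p\<close>. Hence \<open>h\<^sub>K = 0\<close>.
\<close>

section \<open>Angles between unit vectors in the plane\<close>

lemma dT_attained:
  obtains k :: int where "dT a b = \<bar>a - b - 2 * pi * of_int k\<bar>" "\<bar>a - b - 2 * pi * of_int k\<bar> \<le> pi"
proof -
  define x where "x = (a - b) / (2 * pi)"
  have dist_eq: "\<bar>a - b - 2 * pi * of_int k\<bar> = 2 * pi * \<bar>x - of_int k\<bar>" for k :: int
  proof -
    have "a - b - 2 * pi * of_int k = 2 * pi * (x - of_int k)" by (simp add: x_def field_simps)
    then show ?thesis by (simp add: abs_mult)
  qed
  have round: "\<bar>x - of_int (round x)\<bar> \<le> 1 / 2"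
    using of_int_round_abs_le[of x] by (simp add: abs_minus_commute)
  have nearest: "\<bar>x - of_int (round x)\<bar> \<le> \<bar>x - of_int k\<bar>" for k :: int
  proof (cases "k = round x")
    case False
    then have "1 \<le> \<bar>k - round x\<bar>" by simp
    then have "1 \<le> \<bar>of_int k - of_int (round x) :: real\<bar>"
      by (metis of_int_1_le_iff of_int_abs of_int_diff)
    then show ?thesis using round by linarith
  qed simp
  have "dT a b = \<bar>a - b - 2 * pi * of_int (round x)\<bar>"
    unfolding dT_def dist_eq
    by (rule antisym, rule cINF_lower, auto intro!: cINF_greatest mult_left_mono nearest bdd_belowI[where m = 0])
  moreover have "\<bar>a - b - 2 * pi * of_int (round x)\<bar> \<le> pi"
    using round unfolding dist_eq by (simp add: mult_le_cancel_left)
  ultimately show thesis by (rule that)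
qed

lemma dT_nonneg: "0 \<le> dT a b"
  by (metis abs_ge_zero dT_attained)

lemma dT_le_pi: "dT a b \<le> pi"
  by (metis dT_attained)

lemma cos_dT: "cos (dT a b) = cos (a - b)"
proof -
  obtain k :: int where "dT a b = \<bar>a - b - 2 * pi * of_int k\<bar>"
    using dT_attained by blast
  then show ?thesis by (simp add: cos_diff)
qed

lemma inner_eq_cos_Arg_diff:
  assumes "norm \<nu> = 1" "norm \<mu> = 1"
  shows "inner \<nu> \<mu> = cos (Arg \<nu> - Arg \<mu>)"
proof -
  have "\<nu> \<noteq> 0" "\<mu> \<noteq> 0" using assms by auto
  then have "\<nu> = cis (Arg \<nu>)" "\<mu> = cis (Arg \<mu>)"
    using assms cis_Arg[of \<nu>] cis_Arg[of \<mu>] by (auto simp: sgn_div_norm)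
  then show ?thesis
    by (metis cos_diff cis.sel inner_complex_def)
qed

lemma dT_Arg_le_half_pi_iff:
  assumes "norm \<nu> = 1" "norm \<mu> = 1"
  shows "dT (Arg \<nu>) (Arg \<mu>) \<le> pi / 2 \<longleftrightarrow> 0 \<le> inner \<nu> \<mu>"
proof -
  let ?d = "dT (Arg \<nu>) (Arg \<mu>)"
  have "inner \<nu> \<mu> = cos ?d"
    using inner_eq_cos_Arg_diff[OF assms] cos_dT by simp
  moreover have "?d \<le> pi / 2 \<longleftrightarrow> 0 \<le> cos ?d"
  proof
    assume "0 \<le> cos ?d"
    show "?d \<le> pi / 2"
    proof (rule ccontr)
      assume "\<not> ?d \<le> pi / 2"
      then have "cos ?d < cos (pi / 2)"
        using dT_le_pi by (intro cos_monotone_0_pi) auto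
      with \<open>0 \<le> cos ?d\<close> show False by simp
    qed
  qed (use dT_nonneg[of "Arg \<nu>" "Arg \<mu>"] in \<open>intro cos_ge_zero, auto\<close>)
  ultimately show ?thesis by simp
qed

lemma inner_orthonormal_expansion:
  fixes a b v w :: complex
  assumes "norm a = 1" "norm b = 1" "inner a b = 0"
  shows "inner v w = inner v a * inner w a + inner v b * inner w b"
proof -
  obtain a1 a2 b1 b2 where ab: "a = Complex a1 a2" "b = Complex b1 b2"
    by (metis complex.exhaust)
  have unit: "a1\<^sup>2 + a2\<^sup>2 = 1" "b1\<^sup>2 + b2\<^sup>2 = 1" and orth: "a1 * b1 + a2 * b2 = 0"
    using assms unfolding ab by (auto simp: inner_complex_def cmod_def power2_eq_square)
  have "(a1 * b2 - a2 * b1)\<^sup>2 = (a1\<^sup>2 + a2\<^sup>2) * (b1\<^sup>2 + b2\<^sup>2) - (a1 * b1 + a2 * b2)\<^sup>2"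
    by algebra
  then have det: "(a1 * b2 - a2 * b1)\<^sup>2 = 1" using unit orth by simp
  show ?thesis
    using unit orth det unfolding ab inner_complex_def complex.sel
    by algebra
qed

lemma abs_inner_le_norm_unit: "norm (b :: complex) = 1 \<Longrightarrow> \<bar>inner a b\<bar> \<le> norm a"
  using Cauchy_Schwarz_ineq2[of a b] by simp

lemma inner_pos_if_close:
  fixes b n \<nu> :: complex
  assumes "norm b = 1" "dist n \<nu> < inner \<nu> b"
  shows "0 < inner n b"
proof -
  have "inner n b = inner \<nu> b + inner (n - \<nu>) b" by (simp add: inner_diff_left)
  then show ?thesis
    using abs_inner_le_norm_unit[OF assms(1), of "n - \<nu>"] assms(2) by (simp add: dist_norm)
qed

lemma obtuse_pair_leaves_quadrant:
  fixes a b n m :: complex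
  assumes "norm a = 1" "norm b = 1" "inner a b = 0"
    and "inner n m < 0" "0 < inner n a" "0 < inner m b"
  shows "inner m a < 0 \<or> inner n b < 0"
proof (rule ccontr)
  assume "\<not> ?thesis"
  then have "0 \<le> inner n a * inner m a" "0 \<le> inner n b * inner m b"
    using assms(5,6) by auto
  then show False
    using inner_orthonormal_expansion[OF assms(1-3), of n m] assms(4) by linarith
qed

section \<open>Outer normals and depth of a convex body\<close>

lemma outer_normal_iff_inner:
  "outer_normal K z \<nu> \<longleftrightarrow> z \<in> frontier K \<and> norm \<nu> = 1 \<and> (\<forall>u\<in>K. inner (u - z) \<nu> \<le> 0)"
  by (simp add: outer_normal_def inner_complex_def)

lemma outer_normal_limit:
  assumes normal: "\<And>k. outer_normal K (z k) (\<nu> k)"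
    and lim: "z \<longlonglongrightarrow> p" "\<nu> \<longlonglongrightarrow> n"
  shows "outer_normal K p n"
proof -
  have "p \<in> frontier K"
    using closed_sequentially[OF frontier_closed _ lim(1)] normal by (auto simp: outer_normal_iff_inner)
  moreover have "norm n = 1"
    using tendsto_norm[OF lim(2)] normal LIMSEQ_unique[of "\<lambda>_. 1" 1 "norm n"]
    by (simp add: outer_normal_iff_inner)
  moreover have "inner (u - p) n \<le> 0" if "u \<in> K" for u
    using normal that
    by (intro LIMSEQ_le_const2[OF tendsto_inner[OF tendsto_diff[OF tendsto_const lim(1)] lim(2)]])
      (auto simp: outer_normal_iff_inner)
  ultimately show ?thesis by (simp add: outer_normal_iff_inner)
qed

lemma inner_neg_at_interior_point:
  fixes c p e :: "'a :: real_inner"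
  assumes c: "c \<in> interior S" and e: "norm e = 1"
    and supp: "\<And>u. u \<in> S \<Longrightarrow> inner (u - p) e \<le> 0"
  shows "inner (c - p) e < 0"
proof -
  obtain r where r: "r > 0" "ball c r \<subseteq> S"
    using c mem_interior by blast
  have "c + (r / 2) *\<^sub>R e \<in> S"
    using r e by (intro subsetD[OF r(2)]) (simp add: dist_norm)
  then have "inner (c + (r / 2) *\<^sub>R e - p) e \<le> 0" by (rule supp)
  moreover have "inner e e = 1" using e by (simp add: dot_square_norm)
  ultimately show ?thesis
    using r(1) by (simp add: inner_diff_left inner_add_left)
qed

definition normals_nonobtuse :: "complex set \<Rightarrow> real \<Rightarrow> bool" where
  "normals_nonobtuse K t \<longleftrightarrow> (\<forall>z z' \<nu> \<mu>. outer_normal K z \<nu> \<longrightarrow> outer_normal K z' \<mu> \<longrightarrow>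
     dist z z' \<le> t \<longrightarrow> 0 \<le> inner \<nu> \<mu>)"

lemma normals_nonobtuse_antimono:
  "normals_nonobtuse K t \<Longrightarrow> \<tau> \<le> t \<Longrightarrow> normals_nonobtuse K \<tau>"
  unfolding normals_nonobtuse_def by (meson order_trans)

definition normal_angles :: "complex set \<Rightarrow> real \<Rightarrow> real set" where
  "normal_angles K t = {dT (Arg \<nu>) (Arg \<mu>) | \<nu> \<mu> z z'.
     outer_normal K z \<nu> \<and> outer_normal K z' \<mu> \<and> dist z z' \<le> t}"

lemma omegaK_eq_Sup: "omegaK K t = Sup (normal_angles K t)"
  by (simp add: omegaK_def normal_angles_def)

lemma normal_angles_le_pi: "x \<in> normal_angles K t \<Longrightarrow> x \<le> pi"
  by (auto simp: normal_angles_def dT_le_pi)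

lemma normal_angles_bdd_above: "bdd_above (normal_angles K t)"
  by (rule bdd_aboveI[OF normal_angles_le_pi])

lemma normal_angles_mono: "t \<le> t' \<Longrightarrow> normal_angles K t \<subseteq> normal_angles K t'"
  unfolding normal_angles_def by fastforce

lemma normal_angles_le_half_pi_iff:
  "(\<forall>x\<in>normal_angles K t. x \<le> pi / 2) \<longleftrightarrow> normals_nonobtuse K t"
  unfolding normal_angles_def normals_nonobtuse_def
  using dT_Arg_le_half_pi_iff by (auto simp: outer_normal_iff_inner) blast+

locale convex_body =
  fixes K :: "complex set"
  assumes convex_domain: "convex_domain K"
begin

lemma K_compact: "compact K" and K_convex: "convex K" and K_interior_nonempty: "interior K \<noteq> {}"
  using convex_domain by (auto simp: convex_domain_def)

lemma K_closed: "closed K" and K_bounded: "bounded K"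
  by (simp_all add: K_compact compact_imp_closed compact_imp_bounded)

lemma frontier_subset_K: "frontier K \<subseteq> K"
  by (simp add: K_closed frontier_subset_closed)

lemma frontier_nonempty: "frontier K \<noteq> {}"
  using K_bounded K_interior_nonempty not_bounded_UNIV frontier_not_empty
  by (metis interior_empty)

lemma outer_normal_exists:
  assumes "z \<in> frontier K"
  obtains \<nu> where "outer_normal K z \<nu>"
proof -
  have "rel_interior K = interior K"
    using K_interior_nonempty rel_interior_nonempty_interior by blast
  then have "z \<in> closure K" "z \<notin> rel_interior K"
    using assms by (auto simp: frontier_def)
  then obtain a where a: "a \<noteq> 0" "\<And>y. y \<in> closure K \<Longrightarrow> a \<bullet> z \<le> a \<bullet> y"
    using supporting_hyperplane_relative_frontier[OF K_convex] by metis
  have "inner (u - z) (- sgn a) \<le> 0" if "u \<in> K" for u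
  proof -
    have "a \<bullet> z \<le> a \<bullet> u" using a(2) that closure_subset by blast
    then show ?thesis by (simp add: sgn_div_norm inner_diff_right inner_commute)
  qed
  with a(1) assms show thesis
    by (intro that[of "- sgn a"]) (simp add: outer_normal_iff_inner norm_sgn)
qed

lemma outer_normal_at_closest_point:
  assumes "a \<notin> K"
  shows "outer_normal K (closest_point K a) (sgn (a - closest_point K a))"
proof -
  let ?q = "closest_point K a"
  have q: "?q \<in> K" using closest_point_in_set K_closed K_interior_nonempty by fastforce
  have "?q \<notin> interior K"
    using closest_point_in_rel_interior[OF K_closed] affine_hull_nonempty_interior[OF K_interior_nonempty]
      rel_interior_nonempty_interior[OF K_interior_nonempty] assms interior_subset by blast
  then have "?q \<in> frontier K" using q K_closed by (simp add: frontier_def)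
  moreover have "inner (u - ?q) (sgn (a - ?q)) \<le> 0" if "u \<in> K" for u
    using closest_point_dot[OF K_convex K_closed that, of a]
    by (simp add: sgn_div_norm inner_commute mult_nonneg_nonpos)
  moreover have "a \<noteq> ?q" using q assms by auto
  ultimately show ?thesis by (simp add: outer_normal_iff_inner norm_sgn)
qed

lemma normal_angles_nonempty:
  assumes "0 \<le> t"
  shows "normal_angles K t \<noteq> {}"
proof -
  obtain z where "z \<in> frontier K" using frontier_nonempty by blast
  then obtain \<nu> where "outer_normal K z \<nu>" by (rule outer_normal_exists)
  then have "dT (Arg \<nu>) (Arg \<nu>) \<in> normal_angles K t"
    using assms unfolding normal_angles_def by force
  then show ?thesis by blast
qed

lemma omegaK_le_half_pi_iff: "0 \<le> t \<Longrightarrow> omegaK K t \<le> pi / 2 \<longleftrightarrow> normals_nonobtuse K t"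
  unfolding omegaK_eq_Sup normal_angles_le_half_pi_iff[symmetric]
  by (intro cSup_le_iff normal_angles_nonempty) (auto intro: normal_angles_bdd_above)

lemma omegaK_mono: "0 \<le> t \<Longrightarrow> t \<le> t' \<Longrightarrow> omegaK K t \<le> omegaK K t'"
  unfolding omegaK_eq_Sup
  by (intro cSup_subset_mono normal_angles_nonempty normal_angles_mono)
    (auto intro: normal_angles_bdd_above)

lemma omegaK_le_pi: "0 \<le> t \<Longrightarrow> omegaK K t \<le> pi"
  unfolding omegaK_eq_Sup by (intro cSup_least normal_angles_nonempty normal_angles_le_pi)

lemma chord_le_diameter:
  assumes "\<zeta> \<in> K" "norm \<nu> = 1" "0 \<le> h" "\<zeta> - of_real h * \<nu> \<in> K"
  shows "h \<le> diameter K"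
proof -
  have "h = dist \<zeta> (\<zeta> - of_real h * \<nu>)"
    using assms(2,3) by (simp add: dist_norm norm_mult)
  also have "\<dots> \<le> diameter K"
    using assms(1,4) K_bounded by (rule diameter_bounded_bound[rotated])
  finally show ?thesis .
qed

lemma normal_depth_is_max:
  assumes "\<zeta> \<in> K" "norm \<nu> = 1"
  shows normal_depth_nonneg: "0 \<le> normal_depth K \<zeta> \<nu>"
    and normal_depth_mem: "\<zeta> - of_real (normal_depth K \<zeta> \<nu>) * \<nu> \<in> K"
    and normal_depth_ge: "\<And>h. 0 \<le> h \<Longrightarrow> \<zeta> - of_real h * \<nu> \<in> K \<Longrightarrow> h \<le> normal_depth K \<zeta> \<nu>"
proof -
  define H where "H = {h. 0 \<le> h \<and> \<zeta> - of_real h * \<nu> \<in> K}"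
  have H_closed: "closed H"
  proof -
    have "H = {h. 0 \<le> h} \<inter> (\<lambda>h. \<zeta> - of_real h * \<nu>) -` K" by (auto simp: H_def)
    moreover have "closed ((\<lambda>h. \<zeta> - of_real h * \<nu>) -` K)"
      by (intro closed_vimage K_closed continuous_intros)
    ultimately show ?thesis by (simp add: closed_Int closed_Collect_le)
  qed
  have H_bdd: "bdd_above H"
    using chord_le_diameter[OF assms] by (auto simp: H_def intro!: bdd_aboveI[where M = "diameter K"])
  have "0 \<in> H" using assms by (simp add: H_def)
  then have "Sup H \<in> H" using closed_contains_Sup[OF _ H_bdd H_closed] by blast
  moreover have "normal_depth K \<zeta> \<nu> = Sup H" by (simp add: normal_depth_def H_def)
  ultimately show "0 \<le> normal_depth K \<zeta> \<nu>" "\<zeta> - of_real (normal_depth K \<zeta> \<nu>) * \<nu> \<in> K"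
    by (simp_all add: H_def)
  show "\<And>h. 0 \<le> h \<Longrightarrow> \<zeta> - of_real h * \<nu> \<in> K \<Longrightarrow> h \<le> normal_depth K \<zeta> \<nu>"
    using cSup_upper[OF _ H_bdd] by (simp add: normal_depth_def H_def)
qed

lemma normal_depth_le_diameter: "\<zeta> \<in> K \<Longrightarrow> norm \<nu> = 1 \<Longrightarrow> normal_depth K \<zeta> \<nu> \<le> diameter K"
  by (metis chord_le_diameter normal_depth_nonneg normal_depth_mem)

lemma outer_normal_unit_and_point_in_K: "outer_normal K \<zeta> \<nu> \<Longrightarrow> norm \<nu> = 1 \<and> \<zeta> \<in> K"
  using frontier_subset_K by (auto simp: outer_normal_iff_inner)

lemma normal_depth_le_local_depth:
  assumes "outer_normal K \<zeta> \<nu>"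
  shows "normal_depth K \<zeta> \<nu> \<le> local_depth K \<zeta>"
  unfolding local_depth_def
  using assms outer_normal_unit_and_point_in_K normal_depth_le_diameter
  by (intro cSup_upper bdd_aboveI[where M = "diameter K"]) blast+

lemma local_depth_le:
  assumes "\<zeta> \<in> frontier K" "\<And>\<nu>. outer_normal K \<zeta> \<nu> \<Longrightarrow> normal_depth K \<zeta> \<nu> \<le> B"
  shows "local_depth K \<zeta> \<le> B"
  unfolding local_depth_def
  using outer_normal_exists[OF assms(1)] assms(2) by (intro cSup_least) blast+

lemma local_depth_nonneg:
  assumes "\<zeta> \<in> frontier K"
  shows "0 \<le> local_depth K \<zeta>"
proof -
  obtain \<nu> where "outer_normal K \<zeta> \<nu>" using outer_normal_exists[OF assms] .
  then show ?thesis
    using normal_depth_le_local_depth normal_depth_nonneg outer_normal_unit_and_point_in_K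
    by (meson order_trans)
qed

lemma depth_ge: "(\<And>\<zeta>. \<zeta> \<in> frontier K \<Longrightarrow> r \<le> local_depth K \<zeta>) \<Longrightarrow> r \<le> depth K"
  unfolding depth_def using frontier_nonempty by (rule cINF_greatest)

lemma depth_le_local_depth: "\<zeta> \<in> frontier K \<Longrightarrow> depth K \<le> local_depth K \<zeta>"
  unfolding depth_def
  by (rule cINF_lower) (auto intro: bdd_belowI2 local_depth_nonneg)

lemma depth_nonneg: "0 \<le> depth K"
  using depth_ge local_depth_nonneg by blast

lemma inner_normal_closest_point_neg:
  assumes "\<zeta> \<in> K" "0 < t" "\<zeta> - of_real t * \<nu> \<notin> K"
  shows "inner \<nu> (sgn ((\<zeta> - of_real t * \<nu>) - closest_point K (\<zeta> - of_real t * \<nu>))) < 0"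
proof -
  define a where "a = \<zeta> - of_real t * \<nu>"
  define q where "q = closest_point K a"
  have "q \<in> K" unfolding q_def using assms(1) by (intro closest_point_in_set[OF K_closed]) auto
  then have "a \<noteq> q" using assms(3) by (auto simp: a_def)
  then have "0 < inner (a - q) (a - q)" by simp
  moreover have "inner (a - q) (\<zeta> - q) \<le> 0"
    unfolding q_def by (rule closest_point_dot[OF K_convex K_closed assms(1)])
  moreover have "inner (a - q) (a - \<zeta>) = inner (a - q) (a - q) - inner (a - q) (\<zeta> - q)"
    by (simp add: inner_diff_right)
  ultimately have "0 < inner (a - q) (a - \<zeta>)" by linarith
  moreover have "a - \<zeta> = - (t *\<^sub>R \<nu>)" by (simp add: a_def scaleR_conv_of_real)
  ultimately have "inner (a - q) \<nu> < 0"
    using assms(2) by (simp add: mult_less_0_iff)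
  then show ?thesis
    using \<open>a \<noteq> q\<close> by (simp add: a_def[symmetric] q_def[symmetric] sgn_div_norm inner_commute mult_pos_neg)
qed

lemma depth_ge_if_normals_nonobtuse:
  assumes nonobtuse: "normals_nonobtuse K r"
  shows "r \<le> depth K"
proof (rule depth_ge)
  fix \<zeta> assume \<zeta>: "\<zeta> \<in> frontier K"
  obtain \<nu> where \<nu>: "outer_normal K \<zeta> \<nu>" using outer_normal_exists[OF \<zeta>] .
  have unit: "norm \<nu> = 1" and \<zeta>K: "\<zeta> \<in> K" using \<nu> outer_normal_unit_and_point_in_K by auto
  define h where "h = normal_depth K \<zeta> \<nu>"
  have "r \<le> h"
  proof (rule ccontr)
    assume "\<not> r \<le> h"
    define e where "e = (r - h) / 2"
    have e: "0 < e" "h + 2 * e = r" using \<open>\<not> r \<le> h\<close> by (auto simp: e_def field_simps)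
    have h: "0 \<le> h" unfolding h_def using \<zeta>K unit by (rule normal_depth_nonneg)
    define a where "a = \<zeta> - of_real (h + e) * \<nu>"
    have a: "a \<notin> K"
      using normal_depth_ge[OF \<zeta>K unit, of "h + e"] h e by (auto simp: a_def h_def)
    define q where "q = closest_point K a"
    have "dist a q \<le> dist a (\<zeta> - of_real h * \<nu>)"
      using closest_point_le[OF K_closed] normal_depth_mem[OF \<zeta>K unit] by (simp add: q_def h_def)
    also have "\<dots> = e" using unit e by (simp add: a_def dist_norm algebra_simps norm_mult)
    moreover have "dist \<zeta> a = h + e"
      using unit h e by (simp add: a_def dist_norm norm_mult del: of_real_add)
    ultimately have "dist \<zeta> q \<le> r"
      using dist_triangle[of \<zeta> q a] e by linarith
    then have "0 \<le> inner \<nu> (sgn (a - q))"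
      using nonobtuse \<nu> outer_normal_at_closest_point[OF a]
      unfolding normals_nonobtuse_def q_def by blast
    moreover have "inner \<nu> (sgn (a - q)) < 0"
      using inner_normal_closest_point_neg[OF \<zeta>K _ a[unfolded a_def]] h e
      by (simp add: a_def q_def)
    ultimately show False by simp
  qed
  then show "r \<le> local_depth K \<zeta>"
    using normal_depth_le_local_depth[OF \<nu>] by (simp add: h_def)
qed

lemma min_width_pos: "0 < min_width K"
proof -
  obtain c r where r: "0 < r" "ball c r \<subseteq> K"
    using K_interior_nonempty mem_interior by (metis all_not_in_conv)
  obtain M where M: "\<And>z. z \<in> K \<Longrightarrow> norm z \<le> M" using K_bounded bounded_iff by blast
  have "r \<le> dir_width K \<gamma>" for \<gamma>
  proof -
    let ?f = "\<lambda>z. Re (z * cis \<gamma>)"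
    have f_bound: "\<bar>?f z\<bar> \<le> M" if "z \<in> K" for z
      using abs_Re_le_cmod[of "z * cis \<gamma>"] M[OF that] by (simp add: norm_mult)
    define d where "d = of_real (r / 2) * cnj (cis \<gamma>)"
    have d: "?f (c + d) = ?f c + r / 2" "?f (c - d) = ?f c - r / 2"
      by (simp_all add: d_def distrib_right left_diff_distrib mult.assoc cis_cnj cis_mult)
    have cd: "c + d \<in> K" "c - d \<in> K"
      using r by (auto intro!: subsetD[OF r(2)] simp: d_def dist_norm norm_mult)
    have "bdd_above (?f ` K)"
      by (rule bdd_aboveI2[where M = M]) (use f_bound abs_le_D1 in blast)
    then have "?f (c + d) \<le> (SUP z\<in>K. ?f z)" using cd(1) by (rule cSUP_upper[rotated])
    have "bdd_below (?f ` K)"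
      by (rule bdd_belowI2[where m = "- M"]) (use f_bound in \<open>metis abs_le_D2 minus_le_iff\<close>)
    then have "(INF z\<in>K. ?f z) \<le> ?f (c - d)" using cd(2) by (rule cINF_lower)
    with \<open>?f (c + d) \<le> (SUP z\<in>K. ?f z)\<close> show ?thesis unfolding dir_width_def using d by linarith
  qed
  then have "r \<le> min_width K" unfolding min_width_def by (intro cINF_greatest) auto
  with r(1) show ?thesis by simp
qed

text \<open>Being monotone, \<open>\<omega>\<^sub>K\<close> has the supremum over \<open>[0, s)\<close> as its left limit at \<open>s\<close>.\<close>
lemma omegaK_le_omega_minus:
  assumes "0 \<le> r" "r < s"
  shows "omegaK K r \<le> omega_minus K s"
proof -
  let ?L = "SUP x\<in>{0..<s}. omegaK K x"
  have bdd: "bdd_above (omegaK K ` {0..<s})"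
    using omegaK_le_pi by (auto intro!: bdd_aboveI2)
  have "(omegaK K \<longlongrightarrow> ?L) (at_left s)"
  proof (rule order_tendstoI)
    fix a assume "a < ?L"
    then obtain x where x: "x \<in> {0..<s}" "a < omegaK K x"
      using less_cSUP_iff[OF _ bdd] assms by auto
    have "eventually (\<lambda>y. y \<in> {x<..<s}) (at_left s)"
      using x by (intro eventually_at_left_real) auto
    then show "eventually (\<lambda>y. a < omegaK K y) (at_left s)"
      by eventually_elim (use x in \<open>auto intro: less_le_trans[OF _ omegaK_mono]\<close>)
  next
    fix a assume "?L < a"
    have "eventually (\<lambda>y. y \<in> {0<..<s}) (at_left s)"
      using assms by (intro eventually_at_left_real) auto
    then show "eventually (\<lambda>y. omegaK K y < a) (at_left s)"
      by eventually_elim (use \<open>?L < a\<close> in \<open>auto intro: le_less_trans[OF cSUP_upper[OF _ bdd]]\<close>)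
  qed
  then have "omega_minus K s = ?L"
    using assms by (simp add: omega_minus_def tendsto_Lim)
  moreover have "omegaK K r \<le> ?L" using assms by (intro cSUP_upper[OF _ bdd]) auto
  ultimately show ?thesis by simp
qed

lemma right_angle_normal_at_obtuse_corner:
  assumes \<nu>: "outer_normal K p \<nu>" and \<mu>: "outer_normal K p \<mu>" and obtuse: "inner \<nu> \<mu> \<le> 0"
  obtains \<mu>0 where "norm \<mu>0 = 1" "inner \<nu> \<mu>0 = 0" "0 < inner \<mu> \<mu>0"
    "\<And>u. u \<in> K \<Longrightarrow> inner (u - p) \<mu>0 \<le> 0"
proof -
  have unit: "norm \<nu> = 1" "norm \<mu> = 1"
    and supp: "\<And>u. u \<in> K \<Longrightarrow> inner (u - p) \<nu> \<le> 0" "\<And>u. u \<in> K \<Longrightarrow> inner (u - p) \<mu> \<le> 0"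
    using \<nu> \<mu> by (auto simp: outer_normal_iff_inner)
  define \<mu>0 where "\<mu>0 = (if 0 \<le> inner \<mu> (\<i> * \<nu>) then \<i> * \<nu> else - (\<i> * \<nu>))"
  have \<mu>0: "norm \<mu>0 = 1" "inner \<nu> \<mu>0 = 0" "0 \<le> inner \<mu> \<mu>0"
    using unit by (auto simp: \<mu>0_def norm_mult inner_complex_def)
  define a where "a = inner \<mu> \<nu>"
  define b where "b = inner \<mu> \<mu>0"
  have expand: "inner v \<mu> = inner v \<nu> * a + inner v \<mu>0 * b" for v
    using inner_orthonormal_expansion[OF unit(1) \<mu>0(1,2), of v \<mu>] by (simp add: a_def b_def)
  have "a \<le> 0" using obtuse by (simp add: a_def inner_commute)
  have "0 < b"
  proof (rule ccontr)
    assume "\<not> 0 < b"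
    then have "b = 0" using \<mu>0(3) by (simp add: b_def)
    moreover have "a * a + b * b = 1"
      using expand[of \<mu>] unit(2) by (simp add: a_def b_def norm_eq_1)
    ultimately have "a * a = 1" by simp
    then have "a = -1" using \<open>a \<le> 0\<close> square_eq_1_iff[of a] by auto
    obtain c where c: "c \<in> interior K" using K_interior_nonempty by blast
    have "inner (c - p) \<mu> = - inner (c - p) \<nu>" using expand[of "c - p"] \<open>a = -1\<close> \<open>b = 0\<close> by simp
    then show False
      using inner_neg_at_interior_point[OF c unit(1) supp(1)]
        inner_neg_at_interior_point[OF c unit(2) supp(2)] by linarith
  qed
  have "inner (u - p) \<mu>0 \<le> 0" if "u \<in> K" for u
  proof -
    have "0 \<le> inner (u - p) \<nu> * a" using supp(1)[OF that] \<open>a \<le> 0\<close> by (simp add: mult_nonpos_nonpos)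
    then have "inner (u - p) \<mu>0 * b \<le> 0" using supp(2)[OF that] expand[of "u - p"] by linarith
    with \<open>0 < b\<close> show ?thesis by (simp add: mult_le_0_iff)
  qed
  with \<mu>0(1,2) \<open>0 < b\<close> show thesis by (intro that) (auto simp: b_def)
qed

lemma exit_point_in_frontier:
  assumes w: "w \<in> interior K" and e: "norm e = 1"
  shows "0 < normal_depth K w e" and "w - of_real (normal_depth K w e) * e \<in> frontier K"
proof -
  have wK: "w \<in> K" using w interior_subset by blast
  define t where "t = normal_depth K w e"
  define q where "q = w - of_real t * e"
  have step_out: "q - of_real s * e \<notin> K" if "0 < s" for s
  proof
    assume "q - of_real s * e \<in> K"
    then have "t + s \<le> t"
      using normal_depth_ge[OF wK e, of "t + s"] normal_depth_nonneg[OF wK e] that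
      by (simp add: q_def t_def algebra_simps)
    with that show False by simp
  qed
  obtain r where r: "0 < r" "ball w r \<subseteq> K" using w mem_interior by blast
  have "w - of_real (r / 2) * e \<in> K"
    using r e by (intro subsetD[OF r(2)]) (simp add: dist_norm norm_mult)
  then show "0 < normal_depth K w e"
    using normal_depth_ge[OF wK e, of "r / 2"] r(1) by simp
  have "q \<notin> interior K"
  proof
    assume "q \<in> interior K"
    then obtain \<epsilon> where "0 < \<epsilon>" "ball q \<epsilon> \<subseteq> K" using mem_interior by blast
    then have "q - of_real (\<epsilon> / 2) * e \<in> K"
      using e by (intro subsetD[OF \<open>ball q \<epsilon> \<subseteq> K\<close>]) (simp add: dist_norm norm_mult)
    with step_out[of "\<epsilon> / 2"] \<open>0 < \<epsilon>\<close> show False by simp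
  qed
  moreover have "q \<in> K" unfolding q_def t_def using wK e by (rule normal_depth_mem)
  ultimately show "w - of_real (normal_depth K w e) * e \<in> frontier K"
    using K_closed by (simp add: frontier_def q_def t_def)
qed

end

section \<open>Bodies inside a right-angled corner\<close>

locale right_angle_corner = convex_body +
  fixes p e1 e2 :: complex
  assumes corner_in_K: "p \<in> K"
    and unit_e1: "norm e1 = 1" and unit_e2: "norm e2 = 1" and orthogonal: "inner e1 e2 = 0"
    and in_quadrant: "\<And>u. u \<in> K \<Longrightarrow> 0 \<le> inner (u - p) e1 \<and> 0 \<le> inner (u - p) e2"
begin

lemma inner_expand: "inner v w = inner v e1 * inner w e1 + inner v e2 * inner w e2"
  by (rule inner_orthonormal_expansion[OF unit_e1 unit_e2 orthogonal])

text \<open>A normal chord at \<open>q\<close> is stopped by the side \<open>p + \<real> e1\<close> of the quadrant if it points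
  mostly in direction \<open>-e2\<close>, and by the support line at \<open>z'\<close>, which is tilted into the
  quadrant, if it points mostly in direction \<open>-e1\<close>.\<close>
lemma chord_bound_above_tilted_support:
  assumes z': "z' \<in> K" "norm \<mu>' = 1" "\<And>u. u \<in> K \<Longrightarrow> inner (u - z') \<mu>' \<le> 0"
    and tilt: "0 < inner \<mu>' e1" "inner \<mu>' e2 \<le> 0"
    and q: "outer_normal K q m" "0 < s" "q + of_real s * e1 \<in> K"
    and above: "inner (z' - p) e2 < inner (q - p) e2"
    and chord: "0 \<le> h" "q - of_real h * m \<in> K"
  shows "h \<le> inner (q - p) e2 + inner (z' - p) e1 + (inner (q - p) e2 - inner (z' - p) e2) / inner \<mu>' e1"
proof -
  define X where "X u = inner (u - p) e1" for u
  define Y where "Y u = inner (u - p) e2" for u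
  define \<kappa> where "\<kappa> = inner \<mu>' e1"
  define mX where "mX = inner m e1"
  define mY where "mY = inner m e2"
  have XY_diff: "inner (u - v) e1 = X u - X v" "inner (u - v) e2 = Y u - Y v" for u v
    unfolding X_def Y_def by (simp_all add: inner_diff_left)
  have m: "norm m = 1" "\<And>u. u \<in> K \<Longrightarrow> inner (u - q) m \<le> 0" and qK: "q \<in> K"
    using q(1) frontier_subset_K by (auto simp: outer_normal_iff_inner)
  have expand_m: "inner (u - v) m = (X u - X v) * mX + (Y u - Y v) * mY" for u v
    using inner_expand[of "u - v" m] by (simp add: XY_diff mX_def mY_def)
  have "s * mX \<le> 0"
    using m(2)[OF q(3)] by (simp add: mX_def scaleR_conv_of_real[symmetric] inner_commute)
  then have mX: "mX \<le> 0" using q(2) by (simp add: mult_le_0_iff)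
  have Yq: "0 < Y q" using above in_quadrant[OF z'(1)] by (simp add: Y_def)
  have "(X p - X q) * mX + (Y p - Y q) * mY \<le> 0"
    using m(2)[OF corner_in_K] expand_m by simp
  moreover have "0 \<le> X q * mX * -1" using in_quadrant[OF qK] mX by (simp add: X_def mult_nonneg_nonpos)
  ultimately have "0 \<le> Y q * mY" by (simp add: X_def Y_def algebra_simps)
  then have mY: "0 \<le> mY" using Yq by (simp add: zero_le_mult_iff)
  have "mX\<^sup>2 + mY\<^sup>2 = 1"
    using inner_expand[of m m] m(1) by (simp add: mX_def mY_def norm_eq_1 power2_eq_square)
  then have "(mY - mX)\<^sup>2 = 1 - 2 * (mY * mX)" by (simp add: power2_diff algebra_simps)
  then have "1\<^sup>2 \<le> (mY - mX)\<^sup>2" using mult_nonneg_nonpos[OF mY mX] by (simp add: mult.commute)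
  then have mXY: "1 \<le> mY - mX" by (rule power2_le_imp_le) (use mX mY in linarith)
  define u where "u = q - of_real h * m"
  have u_diff: "X u = X q - h * mX" "Y u = Y q - h * mY"
    using XY_diff[of u q] by (simp_all add: u_def mX_def mY_def scaleR_conv_of_real[symmetric])
  have "h * mY \<le> Y q" using in_quadrant[of u] chord(2) u_diff by (simp add: u_def Y_def)
  moreover have "h * - mX \<le> X z' + (Y q - Y z') / \<kappa>"
  proof -
    define \<mu>Y where "\<mu>Y = inner \<mu>' e2"
    have "\<bar>\<mu>Y\<bar> \<le> 1" using abs_inner_le_norm_unit[OF unit_e2, of \<mu>'] z'(2) by (simp add: \<mu>Y_def)
    have "inner (u - z') \<mu>' = (X u - X z') * \<kappa> + (Y u - Y z') * \<mu>Y"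
      using inner_expand[of "u - z'" \<mu>'] by (simp add: XY_diff \<kappa>_def \<mu>Y_def)
    moreover have "inner (u - z') \<mu>' \<le> 0" using z'(3) chord(2) by (simp add: u_def)
    ultimately have "(X q - h * mX - X z') * \<kappa> + (Y q - h * mY - Y z') * \<mu>Y \<le> 0"
      using u_diff by simp
    moreover have "0 \<le> X q * \<kappa>" using in_quadrant[OF qK] tilt(1) by (simp add: X_def \<kappa>_def)
    moreover have "- ((Y q - Y z') * \<mu>Y) \<le> Y q - Y z'"
      using \<open>\<bar>\<mu>Y\<bar> \<le> 1\<close> above mult_left_mono[of "- \<mu>Y" 1 "Y q - Y z'"] by (simp add: Y_def)
    moreover have "h * mY * \<mu>Y \<le> 0"
      using chord(1) mY tilt(2) by (simp add: \<mu>Y_def mult_nonneg_nonpos)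
    ultimately have "h * - mX * \<kappa> \<le> X z' * \<kappa> + (Y q - Y z')" by (simp add: algebra_simps)
    then show ?thesis using tilt(1) by (simp add: \<kappa>_def field_simps)
  qed
  moreover have "h \<le> h * (mY - mX)" using mXY chord(1) mult_left_mono[of 1 "mY - mX" h] by simp
  ultimately show ?thesis by (simp add: X_def Y_def \<kappa>_def algebra_simps)
qed

lemma depth_le_near_tilted_support:
  assumes z': "z' \<in> K" "norm \<mu>' = 1" "\<And>u. u \<in> K \<Longrightarrow> inner (u - z') \<mu>' \<le> 0"
    and tilt: "0 < inner \<mu>' e1" "inner \<mu>' e2 \<le> 0"
    and c: "c \<in> interior K" "dist z' p < inner (c - p) e2"
  shows "depth K \<le> 2 * dist z' p"
proof (rule field_le_epsilon)
  fix \<epsilon> :: real assume "0 < \<epsilon>"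
  define X where "X u = inner (u - p) e1" for u
  define Y where "Y u = inner (u - p) e2" for u
  define \<kappa> where "\<kappa> = inner \<mu>' e1"
  define d where "d = dist z' p"
  have Xz': "X z' \<le> d" and Yz': "Y z' \<le> d" "0 \<le> Y z'"
    using abs_inner_le_norm_unit[OF unit_e1, of "z' - p"] abs_inner_le_norm_unit[OF unit_e2, of "z' - p"]
      in_quadrant[OF z'(1)] by (auto simp: X_def Y_def d_def dist_norm)
  define \<eta> where "\<eta> = min ((Y c - d) / 2) (\<epsilon> / (1 + 1 / \<kappa>))"
  have "0 < 1 + 1 / \<kappa>" using tilt(1) by (simp add: \<kappa>_def add_pos_pos)
  have \<eta>_le: "\<eta> \<le> (Y c - d) / 2" "\<eta> \<le> \<epsilon> / (1 + 1 / \<kappa>)"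
    unfolding \<eta>_def by (rule min.cobounded1, rule min.cobounded2)
  have \<eta>: "0 < \<eta>" "\<eta> * (1 + 1 / \<kappa>) \<le> \<epsilon>"
    using c(2) \<open>0 < \<epsilon>\<close> \<open>0 < 1 + 1 / \<kappa>\<close> \<eta>_le(2)
    by (auto simp: \<eta>_def Y_def d_def le_divide_eq)
  define \<theta> where "\<theta> = (Y z' + \<eta>) / Y c"
  have \<theta>: "0 < \<theta>" "\<theta> \<le> 1" using Yz' \<eta>(1) \<eta>_le(1) by (auto simp: \<theta>_def field_simps)
  define w where "w = p - \<theta> *\<^sub>R (p - c)"
  have w: "w \<in> interior K"
    unfolding w_def using K_convex c(1) corner_in_K \<theta> by (rule mem_interior_convex_shrink)
  have "w - p = \<theta> *\<^sub>R (c - p)" by (simp add: w_def algebra_simps)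
  then have "Y w = \<theta> * Y c" by (simp add: Y_def)
  moreover have "0 < Y c" using c(2) by (simp add: Y_def order_le_less_trans[OF zero_le_dist])
  ultimately have Yw: "Y w = Y z' + \<eta>" by (simp add: \<theta>_def)
  define t where "t = normal_depth K w e1"
  define q where "q = w - of_real t * e1"
  have t: "0 < t" and q: "q \<in> frontier K"
    using exit_point_in_frontier[OF w unit_e1] by (simp_all add: t_def q_def)
  have Yq: "Y q = Y z' + \<eta>"
    using Yw orthogonal by (simp add: q_def Y_def inner_diff_left scaleR_conv_of_real[symmetric])
  have "local_depth K q \<le> Y q + X z' + (Y q - Y z') / \<kappa>"
  proof (rule local_depth_le[OF q])
    fix m assume m: "outer_normal K q m"
    have "norm m = 1" "q \<in> K" using outer_normal_unit_and_point_in_K[OF m] by auto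
    show "normal_depth K q m \<le> Y q + X z' + (Y q - Y z') / \<kappa>"
      using chord_bound_above_tilted_support[OF z' tilt m t _ _
          normal_depth_nonneg normal_depth_mem] \<open>norm m = 1\<close> \<open>q \<in> K\<close> Yq \<eta>(1)
      by (simp add: q_def X_def Y_def \<kappa>_def w_def[symmetric] interior_subset[THEN subsetD, OF w])
  qed
  also have "\<dots> \<le> 2 * d + \<eta> * (1 + 1 / \<kappa>)"
    using Yq Xz' Yz' by (simp add: algebra_simps)
  finally show "depth K \<le> 2 * dist z' p + \<epsilon>"
    using depth_le_local_depth[OF q] \<eta>(2) by (simp add: d_def)
qed

end

context convex_body
begin

lemma depth_le_near_normal_tilted_into_corner:
  assumes "p \<in> K" "norm a = 1" "norm b = 1" "inner a b = 0"
    and "\<And>u. u \<in> K \<Longrightarrow> inner (u - p) a \<le> 0 \<and> inner (u - p) b \<le> 0"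
    and m: "outer_normal K z m" "inner m a < 0" "0 \<le> inner m b"
    and "c \<in> interior K" "dist z p < inner (c - p) (- b)"
  shows "depth K \<le> 2 * dist z p"
proof (rule right_angle_corner.depth_le_near_tilted_support)
  show "right_angle_corner K p (- a) (- b)"
    using convex_body_axioms assms(1-5) by unfold_locales auto
  show "z \<in> K" "norm m = 1" "\<And>u. u \<in> K \<Longrightarrow> inner (u - z) m \<le> 0"
    using m(1) frontier_subset_K by (auto simp: outer_normal_iff_inner)
qed (use m(2,3) assms(9,10) in simp_all)

lemma obtuse_normals_accumulate:
  assumes "\<And>t. 0 < t \<Longrightarrow> \<not> normals_nonobtuse K t"
  obtains p \<nu> \<mu> where "outer_normal K p \<nu>" "outer_normal K p \<mu>" "inner \<nu> \<mu> \<le> 0"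
    "\<And>\<delta>. 0 < \<delta> \<Longrightarrow> \<exists>z z' n m. outer_normal K z n \<and> outer_normal K z' m \<and> inner n m < 0 \<and>
        dist z p < \<delta> \<and> dist z' p < \<delta> \<and> dist n \<nu> < \<delta> \<and> dist m \<mu> < \<delta>"
proof -
  have "\<exists>z z' n m. outer_normal K z n \<and> outer_normal K z' m \<and>
      dist z z' \<le> inverse (real (Suc k)) \<and> inner n m < 0" for k
    using assms[of "inverse (real (Suc k))"] by (auto simp: normals_nonobtuse_def not_le)
  then obtain z z' n m where normal: "\<And>k. outer_normal K (z k) (n k)" "\<And>k. outer_normal K (z' k) (m k)"
    and close: "\<And>k. dist (z k) (z' k) \<le> inverse (real (Suc k))"
    and obtuse: "\<And>k. inner (n k) (m k) < 0"
    by metis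
  define S where "S = frontier K \<times> sphere (0 :: complex) 1 \<times> sphere (0 :: complex) 1"
  have S: "compact S" unfolding S_def using K_compact by (intro compact_Times compact_sphere compact_frontier)
  have "\<forall>k. (z k, n k, m k) \<in> S"
    using normal by (simp add: S_def outer_normal_iff_inner)
  then obtain l r where "l \<in> S" and r: "strict_mono r" and lim: "((\<lambda>k. (z k, n k, m k)) \<circ> r) \<longlonglongrightarrow> l"
    by (rule seq_compactE[OF compact_imp_seq_compact[OF S]])
  obtain p \<nu> \<mu> where l: "l = (p, \<nu>, \<mu>)" by (metis prod.exhaust)
  have z_lim: "(\<lambda>k. z (r k)) \<longlonglongrightarrow> p" and n_lim: "(\<lambda>k. n (r k)) \<longlonglongrightarrow> \<nu>"
    and m_lim: "(\<lambda>k. m (r k)) \<longlonglongrightarrow> \<mu>"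
    using tendsto_fst[OF lim] tendsto_fst[OF tendsto_snd[OF lim]] tendsto_snd[OF tendsto_snd[OF lim]]
    by (simp_all add: l o_def)
  have "(\<lambda>k. z' (r k) - z (r k)) \<longlonglongrightarrow> 0"
  proof (rule Lim_null_comparison)
    show "eventually (\<lambda>k. norm (z' (r k) - z (r k)) \<le> inverse (real (Suc (r k)))) sequentially"
      using close by (simp add: dist_norm norm_minus_commute)
    show "(\<lambda>k. inverse (real (Suc (r k)))) \<longlonglongrightarrow> 0"
      using LIMSEQ_subseq_LIMSEQ[OF LIMSEQ_inverse_real_of_nat r] by (simp add: o_def)
  qed
  from tendsto_add[OF this z_lim] have z'_lim: "(\<lambda>k. z' (r k)) \<longlonglongrightarrow> p" by simp
  have "outer_normal K p \<nu>" "outer_normal K p \<mu>"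
    using outer_normal_limit[OF normal(1) z_lim n_lim] outer_normal_limit[OF normal(2) z'_lim m_lim] by auto
  moreover have "inner \<nu> \<mu> \<le> 0"
    using obtuse by (intro LIMSEQ_le_const2[OF tendsto_inner[OF n_lim m_lim]]) (auto intro: less_imp_le)
  moreover have "\<exists>z z' n m. outer_normal K z n \<and> outer_normal K z' m \<and> inner n m < 0 \<and>
        dist z p < \<delta> \<and> dist z' p < \<delta> \<and> dist n \<nu> < \<delta> \<and> dist m \<mu> < \<delta>" if "0 < \<delta>" for \<delta>
  proof -
    have "eventually (\<lambda>k. dist (z (r k)) p < \<delta> \<and> dist (z' (r k)) p < \<delta> \<and>
        dist (n (r k)) \<nu> < \<delta> \<and> dist (m (r k)) \<mu> < \<delta>) sequentially"
      using that z_lim z'_lim n_lim m_lim by (auto intro!: eventually_conj tendstoD)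
    then obtain k where "dist (z (r k)) p < \<delta>" "dist (z' (r k)) p < \<delta>"
      "dist (n (r k)) \<nu> < \<delta>" "dist (m (r k)) \<mu> < \<delta>"
      using eventually_sequentially by auto
    then show ?thesis using normal obtuse by blast
  qed
  ultimately show thesis by (rule that)
qed

lemma normals_nonobtuse_if_depth_pos:
  assumes "0 < depth K"
  shows "\<exists>t>0. normals_nonobtuse K t"
proof (rule ccontr)
  assume "\<not> ?thesis"
  then have no_t: "\<And>t. 0 < t \<Longrightarrow> \<not> normals_nonobtuse K t" by blast
  obtain p \<nu> \<mu> where \<nu>: "outer_normal K p \<nu>" and \<mu>: "outer_normal K p \<mu>" and "inner \<nu> \<mu> \<le> 0"
    and approx: "\<And>\<delta>. 0 < \<delta> \<Longrightarrow> \<exists>z z' n m. outer_normal K z n \<and> outer_normal K z' m \<and> inner n m < 0 \<and>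
        dist z p < \<delta> \<and> dist z' p < \<delta> \<and> dist n \<nu> < \<delta> \<and> dist m \<mu> < \<delta>"
    using obtuse_normals_accumulate[OF no_t] by blast
  obtain \<mu>0 where \<mu>0: "norm \<mu>0 = 1" "inner \<nu> \<mu>0 = 0" "0 < inner \<mu> \<mu>0"
    "\<And>u. u \<in> K \<Longrightarrow> inner (u - p) \<mu>0 \<le> 0"
    using right_angle_normal_at_obtuse_corner[OF \<nu> \<mu> \<open>inner \<nu> \<mu> \<le> 0\<close>] by blast
  have \<nu>': "norm \<nu> = 1" "p \<in> K" "\<And>u. u \<in> K \<Longrightarrow> inner (u - p) \<nu> \<le> 0"
    using \<nu> frontier_subset_K by (auto simp: outer_normal_iff_inner)
  obtain c where c: "c \<in> interior K" using K_interior_nonempty by blast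
  have gap: "0 < inner (c - p) (- \<mu>0)" "0 < inner (c - p) (- \<nu>)"
    using inner_neg_at_interior_point[OF c \<mu>0(1,4)] inner_neg_at_interior_point[OF c \<nu>'(1,3)] by auto
  define \<delta> where "\<delta> = Min {depth K / 2, 1, inner \<mu> \<mu>0, inner (c - p) (- \<mu>0), inner (c - p) (- \<nu>)}"
  have "0 < \<delta>" using assms \<mu>0(3) gap by (simp add: \<delta>_def)
  then obtain z z' n m where n: "outer_normal K z n" and m: "outer_normal K z' m" and "inner n m < 0"
    and close: "dist z p < \<delta>" "dist z' p < \<delta>" "dist n \<nu> < \<delta>" "dist m \<mu> < \<delta>"
    using approx by blast
  have \<delta>_le: "\<delta> \<le> depth K / 2" "\<delta> \<le> 1" "\<delta> \<le> inner \<mu> \<mu>0"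
    "\<delta> \<le> inner (c - p) (- \<mu>0)" "\<delta> \<le> inner (c - p) (- \<nu>)"
    by (simp_all add: \<delta>_def)
  have "0 < inner n \<nu>"
    using inner_pos_if_close[OF \<nu>'(1), of n \<nu>] close(3) \<delta>_le(2) \<nu>'(1) by (simp add: norm_eq_1)
  moreover have "0 < inner m \<mu>0"
    using inner_pos_if_close[OF \<mu>0(1), of m \<mu>] close(4) \<delta>_le(3) by simp
  ultimately consider "inner m \<nu> < 0" | "inner n \<mu>0 < 0"
    using obtuse_pair_leaves_quadrant[OF \<nu>'(1) \<mu>0(1,2) \<open>inner n m < 0\<close>] by blast
  then have "depth K \<le> 2 * dist z' p \<or> depth K \<le> 2 * dist z p"
  proof cases
    case 1
    have "dist z' p < inner (c - p) (- \<mu>0)" using close(2) \<delta>_le(4) by linarith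
    then show ?thesis
      using depth_le_near_normal_tilted_into_corner[OF \<nu>'(2,1) \<mu>0(1,2) _ m 1 _ c]
        \<nu>'(3) \<mu>0(4) \<open>0 < inner m \<mu>0\<close> by auto
  next
    case 2
    have "dist z p < inner (c - p) (- \<nu>)" using close(1) \<delta>_le(5) by linarith
    then show ?thesis
      using depth_le_near_normal_tilted_into_corner[OF \<nu>'(2) \<mu>0(1) \<nu>'(1) _ _ n 2 _ c]
        \<nu>'(3) \<mu>0(2,4) \<open>0 < inner n \<nu>\<close> by (auto simp: inner_commute)
  qed
  then have "depth K < 2 * \<delta>" using close(1,2) by linarith
  with \<delta>_le(1) assms show False by simp
qed

lemma depth_pos_iff_omegaK_le_half_pi_near_0:
  "0 < depth K \<longleftrightarrow>
     (\<exists>t. 0 < t \<and> t < min_width K \<and> (\<forall>\<tau>. 0 \<le> \<tau> \<and> \<tau> \<le> t \<longrightarrow> omegaK K \<tau> \<le> pi / 2))"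
proof
  assume "0 < depth K"
  then obtain t where "0 < t" "normals_nonobtuse K t" using normals_nonobtuse_if_depth_pos by blast
  define t' where "t' = min t (min_width K / 2)"
  have "0 < t'" "t' < min_width K" using \<open>0 < t\<close> min_width_pos by (auto simp: t'_def)
  moreover have "omegaK K \<tau> \<le> pi / 2" if "0 \<le> \<tau>" "\<tau> \<le> t'" for \<tau>
    using that \<open>normals_nonobtuse K t\<close> omegaK_le_half_pi_iff normals_nonobtuse_antimono
    by (simp add: t'_def)
  ultimately show "\<exists>t. 0 < t \<and> t < min_width K \<and> (\<forall>\<tau>. 0 \<le> \<tau> \<and> \<tau> \<le> t \<longrightarrow> omegaK K \<tau> \<le> pi / 2)"
    by blast
next
  assume "\<exists>t. 0 < t \<and> t < min_width K \<and> (\<forall>\<tau>. 0 \<le> \<tau> \<and> \<tau> \<le> t \<longrightarrow> omegaK K \<tau> \<le> pi / 2)"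
  then obtain t where "0 < t" "omegaK K t \<le> pi / 2" by auto
  then show "0 < depth K"
    using omegaK_le_half_pi_iff depth_ge_if_normals_nonobtuse by fastforce
qed

lemma depth_ge_if_omega_minus_le_half_pi:
  assumes "0 \<le> s" "omega_minus K s \<le> pi / 2"
  shows "s \<le> depth K"
proof (cases "s = 0")
  case False
  with assms(1) have "0 < s" by simp
  then show ?thesis
  proof (rule dense_le_bounded)
    fix r assume "0 < r" "r < s"
    then have "omegaK K r \<le> pi / 2" using omegaK_le_omega_minus[of r s] assms(2) by simp
    with \<open>0 < r\<close> show "r \<le> depth K"
      using omegaK_le_half_pi_iff depth_ge_if_normals_nonobtuse by simp
  qed
qed (simp add: depth_nonneg)

end

theorem proposition2:
  fixes K :: "complex set"
  assumes "convex_domain K"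
  shows "(depth K > 0 \<longleftrightarrow>
           (\<exists>t. 0 < t \<and> t < min_width K \<and> (\<forall>\<tau>. 0 \<le> \<tau> \<and> \<tau> \<le> t \<longrightarrow> omegaK K \<tau> \<le> pi / 2))) \<and>
         (\<forall>s. 0 \<le> s \<and> s \<le> min_width K \<and> omega_minus K s \<le> pi / 2 \<and> pi / 2 \<le> omega_plus K s
           \<longrightarrow> depth K \<ge> s)"
proof -
  interpret convex_body K using assms by (rule convex_body.intro)
  show ?thesis
    using depth_pos_iff_omegaK_le_half_pi_near_0 depth_ge_if_omega_minus_le_half_pi by blast
qed

end
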